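(* Let $R$ be a ring such that $\operatorname{Nil}^*(R)=0$ and $R$ satisfies Köthe's conjecture, and suppose that $xy\in\operatorname{Nil}(R)$ for all $x,y\in\operatorname{Nil}(R)$ with $x^2=0$. Let $r\in\mathbb{N}$ and $x_1,\ldots,x_r\in\operatorname{Nil}(R)$ with $x_1^n=0$ for some $n\in\mathbb{N}$. Then $$x_1^{n_1}x_2x_1^{n_2}x_3\cdots x_1^{n_{r-1}}x_rx_1^{n_r}=0$$ for all positive integers $n_1,\ldots,n_r$ with $n_1+\cdots+n_r\ge n$. In particular, $\operatorname{Nil}(R)$ is multiplicatively closed.
   Context: Rings are associative and not necessarily unital. $\operatorname{Nil}(R)$ is the set of nilpotent elements of $R$; $\operatorname{Nil}^*(R)$ is the upper nilradical, the sum of all nil two-sided ideals of $R$. $R$ satisfies Köthe's conjecture if every nil left ideal of $R$ is contained in a nil two-sided ideal. $\mathbb{N}$ denotes the positive integers. *)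

theory Defs
  imports Main
begin

text \<open>Rings are associative, not necessarily unital: type class ring (no 1).
  Positive powers x^k (k >= 1) are defined without a unit.
  rpow x k denotes x^k for k >= 1; the value at k = 0 is a dummy (0) and
  is never used: all exponents below are required to be positive.\<close>

fun rpow :: "'a::ring \<Rightarrow> nat \<Rightarrow> 'a" where
  "rpow x 0 = 0"
| "rpow x (Suc 0) = x"
| "rpow x (Suc (Suc k)) = x * rpow x (Suc k)"

text \<open>Product of a nonempty list, left to right (empty product is a dummy 0).\<close>
fun lprod :: "'a::ring list \<Rightarrow> 'a" where
  "lprod [] = 0"
| "lprod [a] = a"
| "lprod (a # b # l) = a * lprod (b # l)"

definition nilset :: "'a::ring set" where
  "nilset = {x. \<exists>k\<ge>1. rpow x k = 0}"

definition add_subgroup :: "'a::ring set \<Rightarrow> bool" where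
  "add_subgroup I \<longleftrightarrow> 0 \<in> I \<and> (\<forall>a\<in>I. \<forall>b\<in>I. a - b \<in> I)"

definition left_ideal :: "'a::ring set \<Rightarrow> bool" where
  "left_ideal I \<longleftrightarrow> add_subgroup I \<and> (\<forall>r a. a \<in> I \<longrightarrow> r * a \<in> I)"

definition two_sided_ideal :: "'a::ring set \<Rightarrow> bool" where
  "two_sided_ideal I \<longleftrightarrow> add_subgroup I \<and> (\<forall>r a. a \<in> I \<longrightarrow> r * a \<in> I \<and> a * r \<in> I)"

definition nil_set :: "'a::ring set \<Rightarrow> bool" where
  "nil_set I \<longleftrightarrow> I \<subseteq> nilset"

text \<open>Upper nilradical: the sum of all nil two-sided ideals (all finite sums).\<close>
inductive_set upper_nilradical :: "'a::ring set" where
  zero: "0 \<in> upper_nilradical"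
| mem: "two_sided_ideal I \<Longrightarrow> nil_set I \<Longrightarrow> x \<in> I \<Longrightarrow> x \<in> upper_nilradical"
| add: "a \<in> upper_nilradical \<Longrightarrow> b \<in> upper_nilradical \<Longrightarrow> a + b \<in> upper_nilradical"

definition koethe :: "'a::ring itself \<Rightarrow> bool" where
  "koethe _ \<longleftrightarrow> (\<forall>L::'a set. left_ideal L \<and> nil_set L \<longrightarrow>
      (\<exists>I. two_sided_ideal I \<and> nil_set I \<and> L \<subseteq> I))"

text \<open>The word x1^{n1} x2 x1^{n2} x3 ... x1^{n(r-1)} xr x1^{nr}, indices 1..r.\<close>
definition word :: "(nat \<Rightarrow> 'a::ring) \<Rightarrow> (nat \<Rightarrow> nat) \<Rightarrow> nat \<Rightarrow> 'a" where
  "word x ns r = lprod (concat (map (\<lambda>i. rpow (x 1) (ns i) # (if i < r then [x (i + 1)] else []))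
                                   [1..<r + 1]))"

end

theory Submission
  imports Defs
begin

text \<open>A nonzero element c with R c nil would, by Koethe's conjecture, lie under a nil ideal,
  so R c = 0; then c lies in the left annihilator of R, a square-zero ideal, hence c = 0.
  The key consequence is that p q = 0 forces p y q = 0 for every nilpotent y: for each t the
  element q t p squares to zero, so (q t p) y is nilpotent, and then so is t p y q, since
  (t p y q)^(m+1) = t p y (q t p y)^m q.  Induction on the number of letters gives the
  vanishing of the words: if the word w of r letters satisfies w x1^k = 0 (this is the word
  with its last exponent raised by k), then w x_(r+1) x1^k = 0.  Applied to the letters a, b
  with a^k = 0 and all exponents 1, this gives (a b)^k = 0.\<close>

lemma lprod_Cons: "l \<noteq> [] \<Longrightarrow> lprod (a # l) = a * lprod l"
  by (cases l) auto

lemma lprod_append: "xs \<noteq> [] \<Longrightarrow> ys \<noteq> [] \<Longrightarrow> lprod (xs @ ys) = lprod xs * lprod ys"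
proof (induction xs)
  case Nil
  then show ?case by simp
next
  case (Cons a xs)
  then show ?case
    by (cases "xs = []") (simp_all add: lprod_Cons mult.assoc)
qed

lemma rpow_Suc: "k \<ge> 1 \<Longrightarrow> rpow x (Suc k) = x * rpow x k"
  by (cases k) auto

lemma rpow_add: "a \<ge> 1 \<Longrightarrow> b \<ge> 1 \<Longrightarrow> rpow x (a + b) = rpow x a * rpow x b"
proof (induction a rule: nat_induct_at_least)
  case base
  then show ?case by (simp add: rpow_Suc)
next
  case (Suc k)
  then show ?case by (simp add: rpow_Suc mult.assoc)
qed

lemma rpow_Suc_right: "k \<ge> 1 \<Longrightarrow> rpow x (Suc k) = rpow x k * x"
  using rpow_add[of k 1 x] by simp

lemma rpow_eq_0_mono: "rpow x n = 0 \<Longrightarrow> n \<ge> 1 \<Longrightarrow> n \<le> m \<Longrightarrow> rpow x m = 0"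
  by (cases "m = n") (auto simp: rpow_add[of n "m - n", simplified])

lemma rpow_mult_Suc: "m \<ge> 1 \<Longrightarrow> rpow (a * b) (Suc m) = a * rpow (b * a) m * b"
proof (induction m rule: nat_induct_at_least)
  case base
  then show ?case by (simp add: mult.assoc)
next
  case (Suc k)
  have "rpow (a * b) (Suc (Suc k)) = (a * b) * (a * rpow (b * a) k * b)"
    using Suc by (simp add: rpow_Suc)
  also have "\<dots> = a * ((b * a) * rpow (b * a) k) * b"
    by (simp add: mult.assoc)
  finally show ?case
    using Suc by (simp add: rpow_Suc)
qed

lemma mem_nilset_iff: "x \<in> nilset \<longleftrightarrow> (\<exists>k\<ge>1. rpow x k = 0)"
  by (simp add: nilset_def)

lemma square_zero_mem_nilset: "x * x = 0 \<Longrightarrow> x \<in> nilset"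
  unfolding mem_nilset_iff by (intro exI[of _ 2]) (simp add: numeral_2_eq_2)

lemma eq_0_if_mem_nil_ideal:
  "(upper_nilradical :: 'a::ring set) = {0} \<Longrightarrow> two_sided_ideal I \<Longrightarrow> nil_set I \<Longrightarrow>
    (c :: 'a) \<in> I \<Longrightarrow> c = 0"
  using upper_nilradical.mem by blast

lemma left_ideal_left_multiples: "left_ideal {t * c | t. True}"
  unfolding left_ideal_def add_subgroup_def
proof (intro conjI ballI allI impI)
  show "0 \<in> {t * c | t. True}"
    by (intro CollectI exI[of _ 0]) simp
next
  fix a b
  assume "a \<in> {t * c | t. True}" "b \<in> {t * c | t. True}"
  then obtain s u where "a = s * c" "b = u * c" by auto
  then have "a - b = (s - u) * c" by (simp add: left_diff_distrib)
  then show "a - b \<in> {t * c | t. True}" by blast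
next
  fix r a
  assume "a \<in> {t * c | t. True}"
  then obtain s where "a = s * c" by auto
  then have "r * a = (r * s) * c" by (simp add: mult.assoc)
  then show "r * a \<in> {t * c | t. True}" by blast
qed

lemma two_sided_ideal_left_annihilator: "two_sided_ideal {z :: 'a::ring. \<forall>t. t * z = 0}"
  unfolding two_sided_ideal_def add_subgroup_def
  by (auto simp: right_diff_distrib mult.assoc[symmetric] simp del: mult.assoc)

lemma nil_set_left_annihilator: "nil_set {z :: 'a::ring. \<forall>t. t * z = 0}"
  unfolding nil_set_def using square_zero_mem_nilset by blast

lemma eq_0_if_left_multiples_nil:
  fixes c :: "'a::ring"
  assumes radical: "(upper_nilradical :: 'a set) = {0}"
    and kothe: "koethe TYPE('a)"
    and nil: "\<forall>t. t * c \<in> nilset"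
  shows "c = 0"
proof -
  have "nil_set {t * c | t. True}"
    using nil unfolding nil_set_def by auto
  with kothe left_ideal_left_multiples obtain I
    where I: "two_sided_ideal I" "nil_set I" "{t * c | t. True} \<subseteq> I"
    unfolding koethe_def by blast
  have "t * c = 0" for t
    using I eq_0_if_mem_nil_ideal[OF radical] by blast
  then show "c = 0"
    using eq_0_if_mem_nil_ideal[OF radical two_sided_ideal_left_annihilator
        nil_set_left_annihilator] by blast
qed

lemma mult_nilpotent_between_annihilating_eq_0:
  fixes p q y :: "'a::ring"
  assumes radical: "(upper_nilradical :: 'a set) = {0}"
    and kothe: "koethe TYPE('a)"
    and sq: "\<forall>a\<in>(nilset :: 'a set). \<forall>b\<in>nilset. a * a = 0 \<longrightarrow> a * b \<in> nilset"
    and pq: "p * q = 0" and y: "y \<in> nilset"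
  shows "p * y * q = 0"
proof (rule eq_0_if_left_multiples_nil[OF radical kothe], intro allI)
  fix t
  let ?d = "q * t * p"
  have "?d * ?d = q * t * (p * q) * t * p"
    by (simp add: mult.assoc)
  then have "?d * ?d = 0"
    using pq by simp
  then have "?d * y \<in> nilset"
    using sq square_zero_mem_nilset y by blast
  then obtain m where m: "m \<ge> 1" "rpow (?d * y) m = 0"
    unfolding mem_nilset_iff by blast
  have "rpow ((t * p * y) * q) (Suc m) = (t * p * y) * rpow (q * (t * p * y)) m * q"
    using m(1) by (rule rpow_mult_Suc)
  also have "q * (t * p * y) = ?d * y"
    by (simp add: mult.assoc)
  finally have "rpow ((t * p * y) * q) (Suc m) = 0"
    using m by simp
  then show "t * (p * y * q) \<in> nilset"
    unfolding mem_nilset_iff by (auto simp: mult.assoc)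
qed

lemma word_cong: "(\<And>i. i \<in> {1..r} \<Longrightarrow> ns i = ns' i) \<Longrightarrow> word x ns r = word x ns' r"
  unfolding word_def
  by (intro arg_cong[where f=lprod] arg_cong[where f=concat] map_cong) auto

lemma word_1: "word x ns (Suc 0) = rpow (x 1) (ns 1)"
  unfolding word_def by simp

lemma word_Suc:
  assumes r: "r \<ge> 1"
  shows "word x ns (Suc r) = word x ns r * x (Suc r) * rpow (x 1) (ns (Suc r))"
proof -
  define g where "g = (\<lambda>r i. rpow (x 1) (ns i) # (if i < r then [x (i + 1)] else []))"
  define A where "A = concat (map (g r) [1..<r])"
  have A: "concat (map (g (Suc r)) [1..<r]) = A"
    unfolding A_def by (intro arg_cong[where f=concat] map_cong) (auto simp: g_def)
  have "word x ns r = lprod (A @ [rpow (x 1) (ns r)])"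
    unfolding word_def A_def g_def using r by simp
  moreover have "word x ns (Suc r) =
      lprod (A @ [rpow (x 1) (ns r), x (Suc r), rpow (x 1) (ns (Suc r))])"
    unfolding word_def A[symmetric] g_def using r by simp
  ultimately show ?thesis
    by (cases "A = []") (simp_all add: lprod_append mult.assoc)
qed

lemma word_add_last_exponent:
  assumes r: "r \<ge> 1" and "ns r \<ge> 1" and "m \<ge> 1"
  shows "word x (ns(r := ns r + m)) r = word x ns r * rpow (x 1) m"
proof (cases "r = 1")
  case True
  then show ?thesis
    using assms by (simp add: word_1 rpow_add)
next
  case False
  then obtain k where k: "r = Suc k" "k \<ge> 1"
    using r by (cases r) auto
  have "word x (ns(r := ns r + m)) k = word x ns k"
    by (rule word_cong) (auto simp: k)
  then show ?thesis
    using assms word_Suc[OF k(2), of x "ns(r := ns r + m)"] word_Suc[OF k(2), of x ns]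
    by (simp add: k rpow_add mult.assoc)
qed

lemma sum_merge_last:
  fixes ns :: "nat \<Rightarrow> nat"
  assumes "r \<ge> 1"
  shows "(\<Sum>i=1..r. (ns(r := ns r + ns (Suc r))) i) = (\<Sum>i=1..Suc r. ns i)"
proof -
  obtain k where k: "r = Suc k"
    using assms by (cases r) auto
  have "(\<Sum>i=1..k. (ns(r := ns r + ns (Suc r))) i) = (\<Sum>i=1..k. ns i)"
    by (rule sum.cong) (auto simp: k)
  then show ?thesis
    by (simp add: k)
qed

lemma word_eq_0:
  fixes x :: "nat \<Rightarrow> 'a::ring"
  assumes radical: "(upper_nilradical :: 'a set) = {0}"
    and kothe: "koethe TYPE('a)"
    and sq: "\<forall>a\<in>(nilset :: 'a set). \<forall>b\<in>nilset. a * a = 0 \<longrightarrow> a * b \<in> nilset"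
    and n: "n \<ge> 1" and xn: "rpow (x 1) n = 0"
    and r: "r \<ge> 1" and xs: "\<forall>i\<in>{1..r}. x i \<in> nilset"
    and ns: "\<forall>i\<in>{1..r}. ns i \<ge> 1" and sum: "(\<Sum>i=1..r. ns i) \<ge> n"
  shows "word x ns r = 0"
  using r xs ns sum
proof (induction r arbitrary: ns rule: nat_induct_at_least)
  case base
  then show ?case
    using rpow_eq_0_mono[OF xn n] by (simp add: word_1)
next
  case (Suc r)
  define ns' where "ns' = ns(r := ns r + ns (Suc r))"
  have "\<forall>i\<in>{1..r}. ns' i \<ge> 1"
    using Suc by (auto simp: ns'_def dest: bspec[of _ _ r])
  moreover have "(\<Sum>i=1..r. ns' i) \<ge> n"
    using Suc sum_merge_last[OF Suc.hyps, of ns] by (simp add: ns'_def)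
  ultimately have "word x ns' r = 0"
    using Suc by simp
  moreover have "word x ns' r = word x ns r * rpow (x 1) (ns (Suc r))"
    unfolding ns'_def using Suc by (intro word_add_last_exponent) auto
  ultimately have "word x ns r * x (Suc r) * rpow (x 1) (ns (Suc r)) = 0"
    using Suc.prems(1) mult_nilpotent_between_annihilating_eq_0[OF radical kothe sq] by simp
  then show ?case
    using word_Suc[OF Suc.hyps, of x ns] by simp
qed

lemma rpow_mult_eq_word_exponents_1:
  fixes a b :: "'a::ring"
  assumes "k \<ge> 1"
  shows "rpow (a * b) k = word (\<lambda>i. if i = 1 then a else b) (\<lambda>_. 1) k * b"
  using assms
proof (induction k rule: nat_induct_at_least)
  case base
  then show ?case by (simp add: word_1)
next
  case (Suc k)
  then have "rpow (a * b) (Suc k) = word (\<lambda>i. if i = 1 then a else b) (\<lambda>_. 1) k * b * a * b"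
    by (simp add: rpow_Suc_right mult.assoc)
  then show ?case
    using word_Suc[OF Suc.hyps, of "\<lambda>i. if i = 1 then a else b" "\<lambda>_. 1"] Suc.hyps by simp
qed

lemma nilset_mult_closed:
  assumes radical: "(upper_nilradical :: 'a::ring set) = {0}"
    and kothe: "koethe TYPE('a)"
    and sq: "\<forall>a\<in>(nilset :: 'a set). \<forall>b\<in>nilset. a * a = 0 \<longrightarrow> a * b \<in> nilset"
    and a: "(a :: 'a) \<in> nilset" and b: "b \<in> nilset"
  shows "a * b \<in> nilset"
proof -
  obtain k where k: "k \<ge> 1" "rpow a k = 0"
    using a unfolding mem_nilset_iff by blast
  have "word (\<lambda>i. if i = 1 then a else b) (\<lambda>_. 1) k = 0"
    using k a b by (intro word_eq_0[OF radical kothe sq k(1)]) auto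
  then have "rpow (a * b) k = 0"
    using rpow_mult_eq_word_exponents_1[OF k(1), of a b] by simp
  then show ?thesis
    using k(1) unfolding mem_nilset_iff by blast
qed

theorem lemma2p4:
  fixes x :: "nat \<Rightarrow> 'a::ring" and r n :: nat
  assumes radical: "(upper_nilradical :: 'a set) = {0}"
    and kothe: "koethe TYPE('a)"
    and sq: "\<forall>a\<in>(nilset :: 'a set). \<forall>b\<in>nilset. a * a = 0 \<longrightarrow> a * b \<in> nilset"
    and r: "r \<ge> 1"
    and xs: "\<forall>i\<in>{1..r}. x i \<in> nilset"
    and n: "n \<ge> 1" and xn: "rpow (x 1) n = 0"
  shows "(\<forall>ns. (\<forall>i\<in>{1..r}. ns i \<ge> 1) \<and> (\<Sum>i=1..r. ns i) \<ge> n \<longrightarrow> word x ns r = 0)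
         \<and> (\<forall>a\<in>(nilset :: 'a set). \<forall>b\<in>nilset. a * b \<in> nilset)"
  using word_eq_0[OF radical kothe sq n xn r xs] nilset_mult_closed[OF radical kothe sq]
  by blast

end
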